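(* Let $F$ be a field and let $G$ be a bipartite graph with bipartition $(X,Y)$, where $|X|=m$, $|Y|=n$ and $m\le n$. Suppose $\mathcal{R}_F(G)\neq\emptyset$, and let $H$ be the subgraph obtained from $G$ by deleting $k$ vertices of $X$. Then $$f(H\Box K_2)=m-k.$$
   Context: All graphs are finite and simple. For a graph $H$ with a perfect matching $M$, a subset $S\subseteq M$ is a forcing set of $M$ if $S$ is contained in no other perfect matching of $H$; $f(H,M)$ is the minimum size of a forcing set of $M$, and $f(H)$ is the minimum of $f(H,M)$ over all perfect matchings $M$ of $H$. For a bipartite graph $G$ with bipartition $(X,Y)$, a weighted bi-adjacency matrix of $G$ over $F$ is an $|X|\times|Y|$ matrix over $F$, rows indexed by $X$ and columns by $Y$, whose $(x,y)$ entry is nonzero iff $x$ and $y$ are adjacent. $\mathcal{R}_F(G)$ denotes the set of weighted bi-adjacency matrices $B$ of $G$ over $F$ for which there is another weighted bi-adjacency matrix $C$ of $G$ over $F$ (same row/column indexing) with $BC^{\top}=I_{|X|}$. $K_2$ is the complete graph on two vertices, and $G\Box H$ is the Cartesian product: vertex set $V(G)\times V(H)$, with $(g_1,h_1)\sim(g_2,h_2)$ iff either $g_1=g_2$ and $h_1h_2\in E(H)$, or $h_1=h_2$ and $g_1g_2\in E(G)$. *)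

theory Defs
  imports Main
begin

type_synonym 'v graph = "'v set \<times> 'v set set"

definition simple_graph :: "'v graph \<Rightarrow> bool" where
  "simple_graph G \<longleftrightarrow> finite (fst G) \<and> (\<forall>e\<in>snd G. e \<subseteq> fst G \<and> card e = 2)"

definition perfect_matching :: "'v graph \<Rightarrow> 'v set set \<Rightarrow> bool" where
  "perfect_matching G M \<longleftrightarrow> M \<subseteq> snd G \<and> (\<forall>v\<in>fst G. \<exists>!e. e \<in> M \<and> v \<in> e)"

definition forcing_set :: "'v graph \<Rightarrow> 'v set set \<Rightarrow> 'v set set \<Rightarrow> bool" where
  "forcing_set G M S \<longleftrightarrow> S \<subseteq> M \<and>
     (\<forall>M'. perfect_matching G M' \<and> S \<subseteq> M' \<longrightarrow> M' = M)"

definition forcing_number_pm :: "'v graph \<Rightarrow> 'v set set \<Rightarrow> nat" where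
  "forcing_number_pm G M = (LEAST s. \<exists>S. forcing_set G M S \<and> card S = s)"

definition forcing_number :: "'v graph \<Rightarrow> nat" where
  "forcing_number G = (LEAST s. \<exists>M. perfect_matching G M \<and> forcing_number_pm G M = s)"

definition bipartition :: "'v graph \<Rightarrow> 'v set \<Rightarrow> 'v set \<Rightarrow> bool" where
  "bipartition G X Y \<longleftrightarrow> X \<inter> Y = {} \<and> X \<union> Y = fst G \<and>
     (\<forall>e\<in>snd G. \<exists>x\<in>X. \<exists>y\<in>Y. e = {x, y})"

text \<open>Weighted bi-adjacency matrix of G w.r.t. (X,Y): an X-by-Y matrix, represented as a
  function that is zero outside X \<times> Y, whose (x,y) entry is nonzero iff xy is an edge.\<close>
definition weighted_biadj :: "'v graph \<Rightarrow> 'v set \<Rightarrow> 'v set \<Rightarrow> ('v \<Rightarrow> 'v \<Rightarrow> 'f::field) \<Rightarrow> bool" where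
  "weighted_biadj G X Y B \<longleftrightarrow>
     (\<forall>x y. (x \<notin> X \<or> y \<notin> Y) \<longrightarrow> B x y = 0) \<and>
     (\<forall>x\<in>X. \<forall>y\<in>Y. B x y \<noteq> 0 \<longleftrightarrow> {x, y} \<in> snd G)"

definition R_F :: "'v graph \<Rightarrow> 'v set \<Rightarrow> 'v set \<Rightarrow> ('v \<Rightarrow> 'v \<Rightarrow> 'f::field) set" where
  "R_F G X Y = {B. weighted_biadj G X Y B \<and>
     (\<exists>C. weighted_biadj G X Y C \<and>
        (\<forall>x\<in>X. \<forall>x'\<in>X. (\<Sum>y\<in>Y. B x y * C x' y) = (if x = x' then 1 else 0)))}"

definition delete_vertices :: "'v graph \<Rightarrow> 'v set \<Rightarrow> 'v graph" where
  "delete_vertices G D = (fst G - D, {e \<in> snd G. e \<inter> D = {}})"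

definition K2 :: "bool graph" where
  "K2 = (UNIV, {{False, True}})"

definition box_product :: "'a graph \<Rightarrow> 'b graph \<Rightarrow> ('a \<times> 'b) graph" where
  "box_product G H = (fst G \<times> fst H,
     {{(g1, h1), (g2, h2)} | g1 h1 g2 h2.
        (g1 = g2 \<and> g1 \<in> fst G \<and> {h1, h2} \<in> snd H) \<or>
        (h1 = h2 \<and> h1 \<in> fst H \<and> {g1, g2} \<in> snd G)})"

end

theory Submission
  imports Defs
begin

(* Write H = G - D with colour classes P = X - D and Q = Y. If B C^T = I witnesses R_F(G), then
   deleting the rows indexed by D keeps B C^T = I, so it suffices to show f(H box K2) = |P|.
   The prism H box K2 is bipartite with classes P x {0} + Q x {1} and Q x {0} + P x {1}, and the
   block matrix [[B, I], [I, C^T]] is a weighted bi-adjacency matrix of it whose kernel contains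
   (-C^T w, w) for every w in F^P. Let S be a set of fewer than |P| edges of a perfect matching M.
   Then S covers fewer than |P| vertices of the second class, so some w <> 0 gives a kernel vector
   vanishing on all of them. Starting in its support and following nonzero entries of the matrix
   through the M-partners yields an M-alternating cycle avoiding S; rotating M along it gives a
   second perfect matching containing S, so S does not force M. Conversely, the |P| rungs over P
   force the perfect matching consisting of all rungs. *)

lemma finite_self_map_invariant_subset:
  assumes "finite P" "P \<noteq> {}" "f ` P \<subseteq> P"
  shows "\<exists>Q\<subseteq>P. Q \<noteq> {} \<and> f ` Q = Q"
  using assms
proof (induction P rule: finite_psubset_induct)
  case (psubset P)
  show ?case
  proof (cases "f ` P = P")
    case False
    with psubset.prems have "f ` P \<subset> P" "f ` P \<noteq> {}" "f ` f ` P \<subseteq> f ` P" by blast+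
    with psubset.IH show ?thesis by (meson psubset_imp_subset subset_trans)
  qed (use psubset.prems in blast)
qed

lemma kernel_vector_nonzero_derangement:
  fixes Z :: "'i \<Rightarrow> 'i \<Rightarrow> 'f::field"
  assumes "finite I" and diag: "\<forall>i\<in>I. Z i i \<noteq> 0"
    and kernel: "\<forall>i\<in>I. (\<Sum>j\<in>I. Z i j * v j) = 0" and "\<exists>i\<in>I. v i \<noteq> 0"
  shows "\<exists>Q \<sigma>. Q \<subseteq> I \<and> Q \<noteq> {} \<and> bij_betw \<sigma> Q Q \<and> (\<forall>i\<in>Q. \<sigma> i \<noteq> i \<and> Z i (\<sigma> i) \<noteq> 0)"
proof -
  define P where "P = {i\<in>I. v i \<noteq> 0}"
  have "\<forall>i\<in>P. \<exists>j. j \<in> P \<and> j \<noteq> i \<and> Z i j \<noteq> 0"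
  proof
    fix i assume "i \<in> P"
    have i: "i \<in> I" "Z i i * v i \<noteq> 0" using \<open>i \<in> P\<close> diag unfolding P_def by auto
    have "Z i i * v i + (\<Sum>j\<in>I - {i}. Z i j * v j) = 0"
      using kernel i \<open>finite I\<close> by (simp add: sum.remove)
    with i have "(\<Sum>j\<in>I - {i}. Z i j * v j) \<noteq> 0" by auto
    then obtain j where "j \<in> I - {i}" "Z i j * v j \<noteq> 0" by (meson sum.neutral)
    then show "\<exists>j. j \<in> P \<and> j \<noteq> i \<and> Z i j \<noteq> 0" unfolding P_def by auto
  qed
  from bchoice[OF this] obtain \<sigma> where \<sigma>: "\<forall>i\<in>P. \<sigma> i \<in> P \<and> \<sigma> i \<noteq> i \<and> Z i (\<sigma> i) \<noteq> 0" ..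
  have P: "finite P" "P \<noteq> {}" "\<sigma> ` P \<subseteq> P"
    using assms \<sigma> unfolding P_def by auto
  obtain Q where Q: "Q \<subseteq> P" "Q \<noteq> {}" "\<sigma> ` Q = Q"
    using finite_self_map_invariant_subset[OF P] by blast
  have "finite Q" using Q(1) P(1) by (rule finite_subset)
  then have "inj_on \<sigma> Q" using eq_card_imp_inj_on Q(3) by metis
  then have "bij_betw \<sigma> Q Q" using Q(3) by (simp add: bij_betw_def)
  with Q \<sigma> show ?thesis unfolding P_def by (intro exI[of _ Q] exI[of _ \<sigma>]) auto
qed

lemma homogeneous_system_nontrivial_solution:
  fixes a :: "'j \<Rightarrow> 'i \<Rightarrow> 'f::field"
  assumes "finite J" "finite I" "card J < card I"
  shows "\<exists>w. (\<exists>i\<in>I. w i \<noteq> 0) \<and> (\<forall>j\<in>J. (\<Sum>i\<in>I. a j i * w i) = 0)"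
  using assms
proof (induction J arbitrary: I a rule: finite_induct)
  case empty
  then show ?case by (intro exI[of _ "\<lambda>_. 1"]) (auto simp: card_gt_0_iff)
next
  case (insert j0 J)
  show ?case
  proof (cases "\<forall>i\<in>I. a j0 i = 0")
    case True
    with insert show ?thesis by auto
  next
    case False
    then obtain i0 where i0: "i0 \<in> I" "a j0 i0 \<noteq> 0" by auto
    define a' where "a' j i = a j i - a j i0 / a j0 i0 * a j0 i" for j i
    have "card J < card (I - {i0})" "finite (I - {i0})"
      using insert i0 by auto
    with insert.IH obtain w where w: "\<exists>i\<in>I - {i0}. w i \<noteq> 0"
      and sol: "\<forall>j\<in>J. (\<Sum>i\<in>I - {i0}. a' j i * w i) = 0"
      by blast
    define c where "c = - (\<Sum>i\<in>I - {i0}. a j0 i * w i) / a j0 i0"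
    have sum_I: "(\<Sum>i\<in>I. a j i * (w(i0 := c)) i) = a j i0 * c + (\<Sum>i\<in>I - {i0}. a j i * w i)" for j
      using insert.prems i0 by (simp add: sum.remove)
    have "(\<Sum>i\<in>I. a j i * (w(i0 := c)) i) = 0" if "j \<in> insert j0 J" for j
    proof (cases "j = j0")
      case True
      have "a j0 i0 * c = - (\<Sum>i\<in>I - {i0}. a j0 i * w i)" using i0 by (simp add: c_def)
      with sum_I[of j] True show ?thesis by simp
    next
      case False
      have "(\<Sum>i\<in>I - {i0}. a' j i * w i) = a j i0 * c + (\<Sum>i\<in>I - {i0}. a j i * w i)"
        by (simp add: a'_def c_def left_diff_distrib sum_subtractf sum_distrib_left
            sum_divide_distrib mult.assoc)
      moreover have "(\<Sum>i\<in>I - {i0}. a' j i * w i) = 0" using sol that False by auto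
      ultimately show ?thesis using sum_I[of j] by simp
    qed
    with w show ?thesis by (intro exI[of _ "w(i0 := c)"]) auto
  qed
qed

section \<open>Perfect matchings and forcing sets\<close>

lemma perfect_matching_unique_edge:
  assumes "perfect_matching \<Gamma> M" "u \<in> fst \<Gamma>" "e \<in> M" "u \<in> e" "e' \<in> M" "u \<in> e'"
  shows "e = e'"
  using assms unfolding perfect_matching_def by metis

lemma perfect_matching_replace:
  assumes pm: "perfect_matching \<Gamma> M" and N: "N \<subseteq> snd \<Gamma>"
    and closed: "\<forall>e\<in>M. e \<inter> U \<noteq> {} \<longrightarrow> e \<subseteq> U"
    and inside: "\<forall>e\<in>N. e \<subseteq> U" and cover: "\<forall>u\<in>U. \<exists>!e. e \<in> N \<and> u \<in> e"
  shows "perfect_matching \<Gamma> ({e\<in>M. e \<inter> U = {}} \<union> N)"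
  unfolding perfect_matching_def
proof (intro conjI ballI)
  show "{e\<in>M. e \<inter> U = {}} \<union> N \<subseteq> snd \<Gamma>"
    using pm N unfolding perfect_matching_def by blast
next
  fix u assume u: "u \<in> fst \<Gamma>"
  show "\<exists>!e. e \<in> {e\<in>M. e \<inter> U = {}} \<union> N \<and> u \<in> e"
  proof (cases "u \<in> U")
    case True
    then show ?thesis using cover by blast
  next
    case False
    obtain e where e: "e \<in> M" "u \<in> e"
      using pm u unfolding perfect_matching_def by blast
    with False closed have "e \<inter> U = {}" by blast
    with e False inside perfect_matching_unique_edge[OF pm u] show ?thesis by blast
  qed
qed

lemma rotation_edges_cover:
  assumes inj: "inj_on \<mu> Q" and disj: "\<mu> ` Q \<inter> Q = {}" and perm: "bij_betw \<sigma> Q Q"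
    and u: "u \<in> \<mu> ` Q \<union> Q"
  shows "\<exists>!e. e \<in> (\<lambda>b. {\<mu> b, \<sigma> b}) ` Q \<and> u \<in> e"
proof -
  have \<sigma>_Q: "\<sigma> ` Q = Q" and \<sigma>_inj: "inj_on \<sigma> Q" using perm unfolding bij_betw_def by auto
  from u \<sigma>_Q obtain b where b: "b \<in> Q" "u \<in> {\<mu> b, \<sigma> b}" by blast
  have same: "b' = b" if b': "b' \<in> Q" "u \<in> {\<mu> b', \<sigma> b'}" for b'
  proof -
    have sep: "\<mu> c \<noteq> \<sigma> d" if "c \<in> Q" "d \<in> Q" for c d
      using disj \<sigma>_Q that by blast
    have "\<mu> b' = \<mu> b \<or> \<sigma> b' = \<sigma> b"
      using sep[OF b(1) b'(1)] sep[OF b'(1) b(1)] b(2) b'(2) by auto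
    with b(1) b'(1) inj \<sigma>_inj show ?thesis by (metis inj_onD)
  qed
  show ?thesis
  proof (rule ex1I)
    show "{\<mu> b, \<sigma> b} \<in> (\<lambda>b. {\<mu> b, \<sigma> b}) ` Q \<and> u \<in> {\<mu> b, \<sigma> b}" using b by blast
  next
    fix e assume "e \<in> (\<lambda>b. {\<mu> b, \<sigma> b}) ` Q \<and> u \<in> e"
    then obtain b' where "b' \<in> Q" "e = {\<mu> b', \<sigma> b'}" "u \<in> e" by blast
    with same show "e = {\<mu> b, \<sigma> b}" by blast
  qed
qed

lemma rotation_perfect_matching:
  assumes pm: "perfect_matching \<Gamma> M"
    and vertices: "Q \<union> \<mu> ` Q \<subseteq> fst \<Gamma>"
    and matched: "\<forall>b\<in>Q. {\<mu> b, b} \<in> M \<and> \<mu> b \<notin> Q"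
    and perm: "bij_betw \<sigma> Q Q" and edges: "\<forall>b\<in>Q. {\<mu> b, \<sigma> b} \<in> snd \<Gamma>"
  shows "perfect_matching \<Gamma> ({e\<in>M. e \<inter> (\<mu> ` Q \<union> Q) = {}} \<union> (\<lambda>b. {\<mu> b, \<sigma> b}) ` Q)"
proof (rule perfect_matching_replace[OF pm])
  have M_edge: "e = {\<mu> b, b}" if "b \<in> Q" "e \<in> M" "u \<in> e" "u \<in> {\<mu> b, b}" for b e u
  proof -
    have "u \<in> fst \<Gamma>" using that vertices by blast
    then show ?thesis using perfect_matching_unique_edge[OF pm] that matched by blast
  qed
  have inj: "inj_on \<mu> Q"
  proof (rule inj_onI)
    fix b b' assume "b \<in> Q" "b' \<in> Q" "\<mu> b = \<mu> b'"
    then show "b = b'"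
      using M_edge[of b "{\<mu> b', b'}" "\<mu> b"] matched by (auto simp: doubleton_eq_iff)
  qed
  have disj: "\<mu> ` Q \<inter> Q = {}" using matched by blast
  show "\<forall>u\<in>\<mu> ` Q \<union> Q. \<exists>!e. e \<in> (\<lambda>b. {\<mu> b, \<sigma> b}) ` Q \<and> u \<in> e"
    using rotation_edges_cover[OF inj disj perm] by (rule ballI)
  show "(\<lambda>b. {\<mu> b, \<sigma> b}) ` Q \<subseteq> snd \<Gamma>" "\<forall>e\<in>(\<lambda>b. {\<mu> b, \<sigma> b}) ` Q. e \<subseteq> \<mu> ` Q \<union> Q"
    using edges bij_betwE[OF perm] by auto
  show "\<forall>e\<in>M. e \<inter> (\<mu> ` Q \<union> Q) \<noteq> {} \<longrightarrow> e \<subseteq> \<mu> ` Q \<union> Q"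
  proof (intro ballI impI)
    fix e assume e: "e \<in> M" "e \<inter> (\<mu> ` Q \<union> Q) \<noteq> {}"
    then obtain u b where u: "u \<in> e" and b: "b \<in> Q" "u \<in> {\<mu> b, b}" by blast
    have "e = {\<mu> b, b}" using M_edge[OF b(1) e(1) u b(2)] .
    with b(1) show "e \<subseteq> \<mu> ` Q \<union> Q" by auto
  qed
qed

lemma perfect_matching_rotate:
  assumes pm: "perfect_matching \<Gamma> M"
    and vertices: "Q \<union> \<mu> ` Q \<subseteq> fst \<Gamma>" and "Q \<noteq> {}"
    and matched: "\<forall>b\<in>Q. {\<mu> b, b} \<in> M \<and> \<mu> b \<notin> Q"
    and perm: "bij_betw \<sigma> Q Q"
    and rotated: "\<forall>b\<in>Q. \<sigma> b \<noteq> b \<and> {\<mu> b, \<sigma> b} \<in> snd \<Gamma>"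
  shows "\<exists>M'. perfect_matching \<Gamma> M' \<and> M' \<noteq> M \<and> {e\<in>M. e \<inter> \<mu> ` Q = {}} \<subseteq> M'"
proof -
  define M' where "M' = {e\<in>M. e \<inter> (\<mu> ` Q \<union> Q) = {}} \<union> (\<lambda>b. {\<mu> b, \<sigma> b}) ` Q"
  have "perfect_matching \<Gamma> M'"
    unfolding M'_def using rotated
    by (intro rotation_perfect_matching[OF pm vertices matched perm]) blast
  moreover have "{e\<in>M. e \<inter> \<mu> ` Q = {}} \<subseteq> M'"
  proof
    fix e assume "e \<in> {e\<in>M. e \<inter> \<mu> ` Q = {}}"
    then have e: "e \<in> M" "e \<inter> \<mu> ` Q = {}" by auto
    have "b \<notin> e" if b: "b \<in> Q" for b
    proof
      assume "b \<in> e"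
      moreover have "b \<in> fst \<Gamma>" using b vertices by blast
      ultimately have "e = {\<mu> b, b}"
        using perfect_matching_unique_edge[OF pm _ e(1)] b matched by blast
      with e(2) b show False by blast
    qed
    with e show "e \<in> M'" unfolding M'_def by blast
  qed
  moreover obtain b where b: "b \<in> Q" using \<open>Q \<noteq> {}\<close> by blast
  have "{\<mu> b, \<sigma> b} \<notin> M"
  proof
    assume "{\<mu> b, \<sigma> b} \<in> M"
    moreover have "\<mu> b \<in> fst \<Gamma>" using b vertices by blast
    ultimately have "{\<mu> b, \<sigma> b} = {\<mu> b, b}"
      using perfect_matching_unique_edge[OF pm] b matched by blast
    with b matched rotated show False by (auto simp: doubleton_eq_iff)
  qed
  moreover have "{\<mu> b, \<sigma> b} \<in> M'" using b unfolding M'_def by blast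
  ultimately show ?thesis by metis
qed

lemma bipartition_edgeD:
  assumes "bipartition \<Gamma> A B" "e \<in> snd \<Gamma>"
  obtains a b where "a \<in> A" "b \<in> B" "e = {a, b}"
  using assms unfolding bipartition_def by metis

lemma bipartition_finite_edges:
  assumes bip: "bipartition \<Gamma> A B" and "finite (fst \<Gamma>)"
  shows "finite (snd \<Gamma>)"
proof -
  have "snd \<Gamma> \<subseteq> Pow (fst \<Gamma>)"
  proof
    fix e assume "e \<in> snd \<Gamma>"
    then obtain a b where "a \<in> A" "b \<in> B" "e = {a, b}" by (rule bipartition_edgeD[OF bip])
    with bip show "e \<in> Pow (fst \<Gamma>)" unfolding bipartition_def by blast
  qed
  with \<open>finite (fst \<Gamma>)\<close> show ?thesis by (meson finite_Pow_iff finite_subset)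
qed

lemma bipartition_perfect_matching_subset_eq:
  assumes bip: "bipartition \<Gamma> A B" and pm: "perfect_matching \<Gamma> M" "perfect_matching \<Gamma> M'"
    and "M \<subseteq> M'"
  shows "M' = M"
proof
  show "M' \<subseteq> M"
  proof
    fix e assume e: "e \<in> M'"
    with pm(2) have "e \<in> snd \<Gamma>" unfolding perfect_matching_def by blast
    then obtain a b where ab: "a \<in> A" "e = {a, b}" by (rule bipartition_edgeD[OF bip])
    with bip have a: "a \<in> fst \<Gamma>" unfolding bipartition_def by blast
    then obtain e' where e': "e' \<in> M" "a \<in> e'" using pm(1) unfolding perfect_matching_def by blast
    have "e' = e"
      using perfect_matching_unique_edge[OF pm(2) a] e' e ab(2) \<open>M \<subseteq> M'\<close> by blast
    with e' show "e \<in> M" by simp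
  qed
qed fact

lemma forcing_set_self:
  assumes "bipartition \<Gamma> A B" "perfect_matching \<Gamma> M"
  shows "forcing_set \<Gamma> M M"
  using bipartition_perfect_matching_subset_eq[OF assms] unfolding forcing_set_def by blast

lemma forcing_number_pm_le:
  "forcing_set \<Gamma> M S \<Longrightarrow> forcing_number_pm \<Gamma> M \<le> card S"
  unfolding forcing_number_pm_def by (rule Least_le) blast

lemma le_forcing_number_pm:
  assumes "forcing_set \<Gamma> M S0" and "\<And>S. forcing_set \<Gamma> M S \<Longrightarrow> c \<le> card S"
  shows "c \<le> forcing_number_pm \<Gamma> M"
  unfolding forcing_number_pm_def by (rule LeastI2_ex) (use assms in blast)+

lemma bipartition_card_covered_le:
  assumes bip: "bipartition \<Gamma> A B" and "S \<subseteq> snd \<Gamma>" "finite S"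
  shows "card (B \<inter> \<Union>S) \<le> card S"
proof -
  have one: "card (B \<inter> e) \<le> 1" if "e \<in> S" for e
  proof -
    have "e \<in> snd \<Gamma>" using that assms(2) by blast
    then obtain a b where "a \<in> A" "e = {a, b}" by (rule bipartition_edgeD[OF bip])
    moreover have "a \<notin> B" using bip \<open>a \<in> A\<close> unfolding bipartition_def by blast
    ultimately have "B \<inter> e \<subseteq> {b}" by blast
    then show ?thesis using card_mono[of "{b}" "B \<inter> e"] by simp
  qed
  have "B \<inter> \<Union>S = (\<Union>e\<in>S. B \<inter> e)" by blast
  also have "card \<dots> \<le> (\<Sum>e\<in>S. card (B \<inter> e))" using \<open>finite S\<close> by (rule card_UN_le)
  also have "\<dots> \<le> (\<Sum>e\<in>S. 1)" using one by (rule sum_mono)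
  finally show ?thesis by simp
qed

lemma perfect_matching_partner_avoiding:
  assumes bip: "bipartition \<Gamma> A B" and pm: "perfect_matching \<Gamma> M" and "S \<subseteq> M"
    and b: "b \<in> B" "b \<notin> \<Union>S"
  shows "\<exists>a\<in>A. a \<notin> \<Union>S \<and> {a, b} \<in> M"
proof -
  have V: "A \<inter> B = {}" "A \<subseteq> fst \<Gamma>" "B \<subseteq> fst \<Gamma>"
    using bip unfolding bipartition_def by auto
  obtain e where e: "e \<in> M" "b \<in> e"
    using pm b(1) V(3) unfolding perfect_matching_def by blast
  have "e \<in> snd \<Gamma>" using pm e(1) unfolding perfect_matching_def by blast
  then obtain a b' where "a \<in> A" "b' \<in> B" "e = {a, b'}" by (rule bipartition_edgeD[OF bip])
  with e(2) b(1) V(1) have a: "a \<in> A" "e = {a, b}" by auto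
  have "a \<notin> \<Union>S"
  proof
    assume "a \<in> \<Union>S"
    then obtain e' where e': "e' \<in> S" "a \<in> e'" by blast
    have "e' = e"
      using perfect_matching_unique_edge[OF pm _ _ e'(2) e(1)] a V(2) e' \<open>S \<subseteq> M\<close> by auto
    with e' e(2) b(2) show False by blast
  qed
  with a e(1) show ?thesis by blast
qed

lemma kernel_vector_alternating_cycle:
  fixes W :: "'a \<Rightarrow> 'a \<Rightarrow> 'f::field"
  assumes fin: "finite (fst \<Gamma>)" and bip: "bipartition \<Gamma> A B" and W: "weighted_biadj \<Gamma> A B W"
    and pm: "perfect_matching \<Gamma> M" and "S \<subseteq> M"
    and kernel: "\<forall>p\<in>A. (\<Sum>q\<in>B. W p q * v q) = 0"
    and vanish: "\<forall>q\<in>B \<inter> \<Union>S. v q = 0" and nonzero: "\<exists>q\<in>B. v q \<noteq> 0"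
  shows "\<exists>Q \<mu> \<sigma>. Q \<subseteq> B - \<Union>S \<and> Q \<noteq> {} \<and> bij_betw \<sigma> Q Q \<and>
    (\<forall>b\<in>Q. \<mu> b \<in> A - \<Union>S \<and> {\<mu> b, b} \<in> M \<and> \<sigma> b \<noteq> b \<and> {\<mu> b, \<sigma> b} \<in> snd \<Gamma>)"
proof -
  define C where "C = B - \<Union>S"
  have "B \<subseteq> fst \<Gamma>" using bip unfolding bipartition_def by auto
  then have "finite B" using fin by (rule finite_subset)
  have "\<forall>b\<in>C. \<exists>a. a \<in> A \<and> a \<notin> \<Union>S \<and> {a, b} \<in> M"
    using perfect_matching_partner_avoiding[OF bip pm \<open>S \<subseteq> M\<close>] unfolding C_def by blast
  from bchoice[OF this] obtain \<mu> where \<mu>: "\<forall>b\<in>C. \<mu> b \<in> A \<and> \<mu> b \<notin> \<Union>S \<and> {\<mu> b, b} \<in> M" ..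
  have edge_iff: "W a b \<noteq> 0 \<longleftrightarrow> {a, b} \<in> snd \<Gamma>" if "a \<in> A" "b \<in> B" for a b
    using W that unfolding weighted_biadj_def by blast
  have "M \<subseteq> snd \<Gamma>" using pm unfolding perfect_matching_def by blast
  with \<mu> edge_iff have diag: "\<forall>b\<in>C. W (\<mu> b) b \<noteq> 0" unfolding C_def by auto
  have "\<forall>b\<in>C. (\<Sum>q\<in>C. W (\<mu> b) q * v q) = 0"
  proof
    fix b assume "b \<in> C"
    have "(\<Sum>q\<in>C. W (\<mu> b) q * v q) = (\<Sum>q\<in>B. W (\<mu> b) q * v q)"
      using \<open>finite B\<close> vanish unfolding C_def by (intro sum.mono_neutral_left) auto
    with kernel \<mu> \<open>b \<in> C\<close> show "(\<Sum>q\<in>C. W (\<mu> b) q * v q) = 0" by simp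
  qed
  moreover have "\<exists>b\<in>C. v b \<noteq> 0" using nonzero vanish unfolding C_def by auto
  moreover have "finite C" using \<open>finite B\<close> unfolding C_def by simp
  ultimately obtain Q \<sigma> where Q: "Q \<subseteq> C" "Q \<noteq> {}" "bij_betw \<sigma> Q Q"
    and \<sigma>: "\<forall>b\<in>Q. \<sigma> b \<noteq> b \<and> W (\<mu> b) (\<sigma> b) \<noteq> 0"
    using kernel_vector_nonzero_derangement[of C "\<lambda>b. W (\<mu> b)" v] diag by auto
  have "\<forall>b\<in>Q. \<mu> b \<in> A - \<Union>S \<and> {\<mu> b, b} \<in> M \<and> \<sigma> b \<noteq> b \<and> {\<mu> b, \<sigma> b} \<in> snd \<Gamma>"
  proof
    fix b assume b: "b \<in> Q"
    then have "b \<in> C" "\<sigma> b \<in> C" using Q(1) bij_betwE[OF Q(3)] by auto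
    then have "\<mu> b \<in> A - \<Union>S" "{\<mu> b, b} \<in> M" "\<sigma> b \<in> B" using \<mu> unfolding C_def by auto
    with edge_iff[of "\<mu> b" "\<sigma> b"] \<sigma> b
    show "\<mu> b \<in> A - \<Union>S \<and> {\<mu> b, b} \<in> M \<and> \<sigma> b \<noteq> b \<and> {\<mu> b, \<sigma> b} \<in> snd \<Gamma>" by auto
  qed
  with Q show ?thesis unfolding C_def by (intro exI[of _ Q] exI[of _ \<mu>] exI[of _ \<sigma>]) auto
qed

lemma kernel_vector_not_forcing:
  fixes W :: "'a \<Rightarrow> 'a \<Rightarrow> 'f::field"
  assumes "finite (fst \<Gamma>)" and bip: "bipartition \<Gamma> A B" and "weighted_biadj \<Gamma> A B W"
    and pm: "perfect_matching \<Gamma> M" and "S \<subseteq> M"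
    and "\<forall>p\<in>A. (\<Sum>q\<in>B. W p q * v q) = 0"
    and "\<forall>q\<in>B \<inter> \<Union>S. v q = 0" and "\<exists>q\<in>B. v q \<noteq> 0"
  shows "\<not> forcing_set \<Gamma> M S"
proof
  assume forcing: "forcing_set \<Gamma> M S"
  obtain Q \<mu> \<sigma> where Q: "Q \<subseteq> B - \<Union>S" "Q \<noteq> {}" "bij_betw \<sigma> Q Q"
    and cycle: "\<forall>b\<in>Q. \<mu> b \<in> A - \<Union>S \<and> {\<mu> b, b} \<in> M \<and> \<sigma> b \<noteq> b \<and> {\<mu> b, \<sigma> b} \<in> snd \<Gamma>"
    using kernel_vector_alternating_cycle[OF assms] by metis
  have V: "A \<inter> B = {}" "A \<union> B = fst \<Gamma>" using bip unfolding bipartition_def by auto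
  have "Q \<subseteq> B" using Q(1) by blast
  have vertices: "Q \<union> \<mu> ` Q \<subseteq> fst \<Gamma>" using \<open>Q \<subseteq> B\<close> cycle V(2) by blast
  have matched: "\<forall>b\<in>Q. {\<mu> b, b} \<in> M \<and> \<mu> b \<notin> Q" using \<open>Q \<subseteq> B\<close> cycle V(1) by blast
  have rotated: "\<forall>b\<in>Q. \<sigma> b \<noteq> b \<and> {\<mu> b, \<sigma> b} \<in> snd \<Gamma>" using cycle by blast
  obtain M' where M': "perfect_matching \<Gamma> M'" "M' \<noteq> M" "{e\<in>M. e \<inter> \<mu> ` Q = {}} \<subseteq> M'"
    using perfect_matching_rotate[OF pm vertices Q(2) matched Q(3) rotated] by blast
  have "S \<subseteq> {e\<in>M. e \<inter> \<mu> ` Q = {}}" using \<open>S \<subseteq> M\<close> cycle by blast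
  with forcing M' show False unfolding forcing_set_def by auto
qed

section \<open>The prism over a bipartite graph\<close>

definition rung :: "'v \<Rightarrow> ('v \<times> bool) set" where
  "rung v = {(v, False), (v, True)}"

definition box_K2_class :: "'v set \<Rightarrow> 'v set \<Rightarrow> ('v \<times> bool) set" where
  "box_K2_class P Q = P \<times> {False} \<union> Q \<times> {True}"

lemma fst_box_K2: "fst (box_product H K2) = fst H \<times> UNIV"
  unfolding box_product_def K2_def by simp

lemma box_K2_edges:
  "snd (box_product H K2) = rung ` fst H \<union> {{(x, h), (y, h)} | x y h. {x, y} \<in> snd H}"
proof (intro equalityI subsetI)
  fix e assume "e \<in> snd (box_product H K2)"
  then obtain g1 h1 g2 h2 where e: "e = {(g1, h1), (g2, h2)}"
    and "(g1 = g2 \<and> g1 \<in> fst H \<and> {h1, h2} = {False, True}) \<or> (h1 = h2 \<and> {g1, g2} \<in> snd H)"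
    unfolding box_product_def K2_def by auto
  then consider "g1 = g2" "g1 \<in> fst H" "h1 \<noteq> h2" | "h1 = h2" "{g1, g2} \<in> snd H"
    by (auto simp: doubleton_eq_iff)
  then show "e \<in> rung ` fst H \<union> {{(x, h), (y, h)} | x y h. {x, y} \<in> snd H}"
  proof cases
    case 1
    then have "e = rung g1" unfolding e rung_def by (cases h1; cases h2) auto
    with 1 show ?thesis by blast
  next
    case 2
    with e show ?thesis by blast
  qed
next
  fix e assume "e \<in> rung ` fst H \<union> {{(x, h), (y, h)} | x y h. {x, y} \<in> snd H}"
  then consider v where "v \<in> fst H" "e = {(v, False), (v, True)}"
    | x y h where "{x, y} \<in> snd H" "e = {(x, h), (y, h)}"
    unfolding rung_def by blast
  then show "e \<in> snd (box_product H K2)"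
  proof cases
    case 1
    then show ?thesis unfolding box_product_def K2_def
      by (simp add: exI[of _ v] exI[of _ False] exI[of _ True])
  next
    case 2
    then show ?thesis unfolding box_product_def K2_def
      by (simp add: exI[of _ x] exI[of _ h] exI[of _ y])
  qed
qed

lemma box_K2_edgeE:
  assumes "e \<in> snd (box_product H K2)"
  obtains (rung) v where "v \<in> fst H" "e = rung v"
    | (layer) x y h where "{x, y} \<in> snd H" "e = {(x, h), (y, h)}"
  using assms unfolding box_K2_edges by blast

lemma box_K2_edge_same_layer:
  "{(x, h), (y, h)} \<in> snd (box_product H K2) \<longleftrightarrow> {x, y} \<in> snd H"
proof
  assume "{(x, h), (y, h)} \<in> snd (box_product H K2)"
  then show "{x, y} \<in> snd H"
  proof (cases rule: box_K2_edgeE)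
    case (rung v)
    from arg_cong[OF rung(2), of "image snd"] show ?thesis by (auto simp: rung_def)
  next
    case (layer a b h')
    from arg_cong[OF layer(2), of "image fst"] have "{x, y} = {a, b}" by simp
    with layer(1) show ?thesis by simp
  qed
qed (auto simp: box_K2_edges)

lemma box_K2_edge_across:
  assumes "h \<noteq> h'"
  shows "{(x, h), (y, h')} \<in> snd (box_product H K2) \<longleftrightarrow> x = y \<and> x \<in> fst H"
proof
  assume "{(x, h), (y, h')} \<in> snd (box_product H K2)"
  then show "x = y \<and> x \<in> fst H"
  proof (cases rule: box_K2_edgeE)
    case (rung v)
    from arg_cong[OF rung(2), of "image fst"] have "{x, y} = {v}" by (simp add: rung_def)
    with rung(1) show ?thesis by simp
  next
    case (layer a b h'')
    from arg_cong[OF layer(2), of "image snd"] assms show ?thesis by auto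
  qed
next
  assume "x = y \<and> x \<in> fst H"
  moreover have "{(x, h), (x, h')} = rung x" using assms unfolding rung_def by (cases h) auto
  ultimately show "{(x, h), (y, h')} \<in> snd (box_product H K2)" unfolding box_K2_edges by auto
qed

lemma mem_rung_iff: "p \<in> rung v \<longleftrightarrow> fst p = v"
  by (cases p; cases "snd p") (auto simp: rung_def)

lemma box_K2_edge_between_classes:
  assumes "bipartition H P Q" "e \<in> snd (box_product H K2)"
  shows "\<exists>a\<in>box_K2_class P Q. \<exists>b\<in>box_K2_class Q P. e = {a, b}"
proof -
  have PQ: "P \<union> Q = fst H" and edges: "\<forall>e\<in>snd H. \<exists>x\<in>P. \<exists>y\<in>Q. e = {x, y}"
    using assms(1) unfolding bipartition_def by auto
  have pair: "\<exists>a\<in>box_K2_class P Q. \<exists>b\<in>box_K2_class Q P. {a', b'} = {a, b}"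
    if "a' \<in> box_K2_class P Q" "b' \<in> box_K2_class Q P" for a' b'
    using that by blast
  from assms(2) show ?thesis
  proof (cases rule: box_K2_edgeE)
    case (rung v)
    then have e: "e = {(v, False), (v, True)}" "e = {(v, True), (v, False)}"
      unfolding rung_def by auto
    from rung(1) PQ consider "v \<in> P" | "v \<in> Q" by auto
    then show ?thesis
    proof cases
      case 1
      with pair[of "(v, False)" "(v, True)"] e(1) show ?thesis by (simp add: box_K2_class_def)
    next
      case 2
      with pair[of "(v, True)" "(v, False)"] e(2) show ?thesis by (simp add: box_K2_class_def)
    qed
  next
    case (layer x y h)
    obtain p q where pq: "p \<in> P" "q \<in> Q" "{x, y} = {p, q}" using edges layer(1) by metis
    have "e = (\<lambda>z. (z, h)) ` {x, y}" using layer(2) by simp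
    then have e: "e = {(p, h), (q, h)}" "e = {(q, h), (p, h)}" using pq(3) by auto
    show ?thesis
    proof (cases h)
      case True
      with pair[of "(q, True)" "(p, True)"] pq e(2) show ?thesis by (simp add: box_K2_class_def)
    next
      case False
      with pair[of "(p, False)" "(q, False)"] pq e(1) show ?thesis by (simp add: box_K2_class_def)
    qed
  qed
qed

lemma bipartition_box_K2:
  assumes "bipartition H P Q"
  shows "bipartition (box_product H K2) (box_K2_class P Q) (box_K2_class Q P)"
proof -
  have PQ: "P \<inter> Q = {}" "P \<union> Q = fst H"
    using assms unfolding bipartition_def by auto
  have "box_K2_class P Q \<inter> box_K2_class Q P = {}"
    using PQ(1) unfolding box_K2_class_def by auto
  moreover have "box_K2_class P Q \<union> box_K2_class Q P = fst (box_product H K2)"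
    using PQ(2) unfolding box_K2_class_def fst_box_K2 by (auto intro: bool_induct)
  ultimately show ?thesis
    using box_K2_edge_between_classes[OF assms] unfolding bipartition_def by blast
qed

(* The matrix [[B, I], [I, C^T]], with rows P x {False} + Q x {True} and columns
   Q x {False} + P x {True}. *)
definition box_K2_biadj ::
  "'v set \<Rightarrow> 'v set \<Rightarrow> ('v \<Rightarrow> 'v \<Rightarrow> 'f) \<Rightarrow> ('v \<Rightarrow> 'v \<Rightarrow> 'f) \<Rightarrow> 'v \<times> bool \<Rightarrow> 'v \<times> bool \<Rightarrow> 'f::field"
  where "box_K2_biadj P Q B C p q =
    (if snd p = snd q then (if snd p then C (fst q) (fst p) else B (fst p) (fst q))
     else of_bool (fst p = fst q \<and> p \<in> box_K2_class P Q))"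

lemma weighted_biadj_box_K2:
  fixes H :: "'v graph" and B C :: "'v \<Rightarrow> 'v \<Rightarrow> 'f::field"
  assumes bip: "bipartition H P Q" and B: "weighted_biadj H P Q B" and C: "weighted_biadj H P Q C"
  shows "weighted_biadj (box_product H K2) (box_K2_class P Q) (box_K2_class Q P)
    (box_K2_biadj P Q B C)"
  unfolding weighted_biadj_def
proof (intro conjI allI impI ballI)
  have support: "x \<in> P \<and> y \<in> Q" if "B x y \<noteq> 0 \<or> C x y \<noteq> 0" for x y
    using B C that unfolding weighted_biadj_def by blast
  fix p q :: "'v \<times> bool"
  assume "p \<notin> box_K2_class P Q \<or> q \<notin> box_K2_class Q P"
  then show "box_K2_biadj P Q B C p q = 0"
    using support[of "fst p" "fst q"] support[of "fst q" "fst p"]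
    unfolding box_K2_biadj_def box_K2_class_def
    by (cases p; cases q; cases "snd p"; cases "snd q") auto
next
  have PQ: "P \<inter> Q = {}" "P \<subseteq> fst H" "Q \<subseteq> fst H"
    using bip unfolding bipartition_def by auto
  have edge_iff: "B x y \<noteq> 0 \<longleftrightarrow> {x, y} \<in> snd H" "C x y \<noteq> 0 \<longleftrightarrow> {y, x} \<in> snd H"
    if "x \<in> P" "y \<in> Q" for x y
    using B C that unfolding weighted_biadj_def by (auto simp: insert_commute)
  fix p q :: "'v \<times> bool"
  assume "p \<in> box_K2_class P Q" "q \<in> box_K2_class Q P"
  then obtain x h y h' where pq: "p = (x, h)" "q = (y, h')"
    and "(h = False \<and> x \<in> P \<or> h = True \<and> x \<in> Q) \<and> (h' = False \<and> y \<in> Q \<or> h' = True \<and> y \<in> P)"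
    unfolding box_K2_class_def by auto
  then consider "h = False" "h' = False" "x \<in> P" "y \<in> Q" | "h = False" "h' = True" "x \<in> P" "y \<in> P"
    | "h = True" "h' = False" "x \<in> Q" "y \<in> Q" | "h = True" "h' = True" "x \<in> Q" "y \<in> P"
    by auto
  then show "box_K2_biadj P Q B C p q \<noteq> 0 \<longleftrightarrow> {p, q} \<in> snd (box_product H K2)"
    using PQ edge_iff unfolding pq box_K2_biadj_def box_K2_class_def
    by cases (auto simp: box_K2_edge_same_layer box_K2_edge_across)
qed

lemma sum_box_K2_class:
  assumes "finite P" "finite Q"
  shows "(\<Sum>q\<in>box_K2_class P Q. f q) = (\<Sum>x\<in>P. f (x, False)) + (\<Sum>y\<in>Q. f (y, True))"
proof -
  have "box_K2_class P Q = (\<lambda>x. (x, False)) ` P \<union> (\<lambda>y. (y, True)) ` Q"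
    unfolding box_K2_class_def by auto
  moreover have "(\<lambda>x. (x, False)) ` P \<inter> (\<lambda>y. (y, True)) ` Q = {}" by auto
  ultimately show ?thesis
    using assms by (simp add: sum.union_disjoint sum.reindex inj_on_def)
qed

lemma box_K2_biadj_kernel:
  fixes B C :: "'v \<Rightarrow> 'v \<Rightarrow> 'f::field"
  assumes fin: "finite P" "finite Q"
    and inverse: "\<forall>x\<in>P. \<forall>x'\<in>P. (\<Sum>y\<in>Q. B x y * C x' y) = (if x = x' then 1 else 0)"
    and p: "p \<in> box_K2_class P Q"
  shows "(\<Sum>q\<in>box_K2_class Q P. box_K2_biadj P Q B C p q *
           (if snd q then w (fst q) else - (\<Sum>x\<in>P. C x (fst q) * w x))) = 0"
    (is "(\<Sum>q\<in>_. _ * ?v q) = 0")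
proof -
  have split: "(\<Sum>q\<in>box_K2_class Q P. box_K2_biadj P Q B C p q * ?v q) =
      - (\<Sum>y\<in>Q. box_K2_biadj P Q B C p (y, False) * (\<Sum>x\<in>P. C x y * w x))
      + (\<Sum>x\<in>P. box_K2_biadj P Q B C p (x, True) * w x)"
    using fin by (simp add: sum_box_K2_class sum_negf)
  obtain u h where p_eq: "p = (u, h)" by fastforce
  show ?thesis
  proof (cases h)
    case False
    with p p_eq have u: "u \<in> P" unfolding box_K2_class_def by auto
    have "(\<Sum>y\<in>Q. box_K2_biadj P Q B C p (y, False) * (\<Sum>x\<in>P. C x y * w x))
        = (\<Sum>x\<in>P. (\<Sum>y\<in>Q. B u y * C x y) * w x)"
      using p_eq False
      by (simp add: box_K2_biadj_def sum_distrib_left sum_distrib_right mult.assoc sum.swap[of _ Q])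
    also have "\<dots> = (\<Sum>x\<in>P. if u = x then w x else 0)"
      using inverse u by (intro sum.cong) auto
    also have "\<dots> = (\<Sum>x\<in>P. box_K2_biadj P Q B C p (x, True) * w x)"
      using p p_eq False by (intro sum.cong) (auto simp: box_K2_biadj_def)
    finally show ?thesis using split by simp
  next
    case True
    have "(\<Sum>y\<in>Q. box_K2_biadj P Q B C p (y, False) * (\<Sum>x\<in>P. C x y * w x))
        = (\<Sum>y\<in>Q. if u = y then (\<Sum>x\<in>P. C x y * w x) else 0)"
      using p p_eq True by (intro sum.cong) (auto simp: box_K2_biadj_def)
    also have "\<dots> = (\<Sum>x\<in>P. box_K2_biadj P Q B C p (x, True) * w x)"
      using p p_eq True fin unfolding box_K2_class_def by (simp add: box_K2_biadj_def mult.commute)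
    finally show ?thesis using split by simp
  qed
qed

lemma perfect_matching_rungs: "perfect_matching (box_product H K2) (rung ` fst H)"
  unfolding perfect_matching_def
proof (intro conjI ballI)
  show "rung ` fst H \<subseteq> snd (box_product H K2)" unfolding box_K2_edges by blast
next
  fix u assume "u \<in> fst (box_product H K2)"
  then have "fst u \<in> fst H" by (auto simp: fst_box_K2)
  then show "\<exists>!e. e \<in> rung ` fst H \<and> u \<in> e" by (auto simp: mem_rung_iff)
qed

lemma forcing_set_rungs:
  assumes bip: "bipartition H P Q"
  shows "forcing_set (box_product H K2) (rung ` fst H) (rung ` P)"
  unfolding forcing_set_def
proof (intro conjI allI impI)
  have PQ: "P \<inter> Q = {}" "P \<union> Q = fst H" and edges: "\<forall>e\<in>snd H. \<exists>x\<in>P. \<exists>y\<in>Q. e = {x, y}"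
    using bip unfolding bipartition_def by auto
  then show "rung ` P \<subseteq> rung ` fst H" by blast
  fix M' assume M': "perfect_matching (box_product H K2) M' \<and> rung ` P \<subseteq> M'"
  then have pm: "perfect_matching (box_product H K2) M'" by blast
  have "rung y \<in> M'" if y: "y \<in> Q" for y
  proof -
    have y_vertex: "(y, False) \<in> fst (box_product H K2)" using y PQ(2) by (auto simp: fst_box_K2)
    then obtain e where e: "e \<in> M'" "(y, False) \<in> e"
      using pm unfolding perfect_matching_def by blast
    then have "e \<in> snd (box_product H K2)" using pm unfolding perfect_matching_def by blast
    then show ?thesis
    proof (cases rule: box_K2_edgeE)
      case (rung v)
      with e show ?thesis by (simp add: mem_rung_iff)
    next
      case (layer x z h)
      obtain p q where pq: "p \<in> P" "q \<in> Q" "{x, z} = {p, q}" using edges layer(1) by metis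
      have "h = False" "y \<in> {x, z}" using e(2) layer(2) by auto
      with pq y PQ(1) have "(p, False) \<in> e" using layer(2) by auto
      moreover have "rung p \<in> M'" "(p, False) \<in> rung p" using M' pq(1) by (auto simp: mem_rung_iff)
      moreover have "(p, False) \<in> fst (box_product H K2)"
        using pq(1) PQ(2) by (auto simp: fst_box_K2)
      ultimately have "e = rung p" using perfect_matching_unique_edge[OF pm] e(1) by blast
      with e(2) have "y = p" by (simp add: mem_rung_iff)
      with pq(1) y PQ(1) show ?thesis by blast
    qed
  qed
  with M' PQ(2) have "rung ` fst H \<subseteq> M'" by blast
  with perfect_matching_rungs pm show "M' = rung ` fst H"
    by (rule bipartition_perfect_matching_subset_eq[OF bipartition_box_K2[OF bip]])
qed

lemma card_le_forcing_set_box_K2: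
  fixes H :: "'v graph" and B C :: "'v \<Rightarrow> 'v \<Rightarrow> 'f::field"
  assumes fin: "finite (fst H)" and bip: "bipartition H P Q"
    and B: "weighted_biadj H P Q B" and C: "weighted_biadj H P Q C"
    and inverse: "\<forall>x\<in>P. \<forall>x'\<in>P. (\<Sum>y\<in>Q. B x y * C x' y) = (if x = x' then 1 else 0)"
    and pm: "perfect_matching (box_product H K2) M"
    and forcing: "forcing_set (box_product H K2) M S"
  shows "card P \<le> card S"
proof (rule ccontr)
  assume "\<not> card P \<le> card S"
  have bip_box: "bipartition (box_product H K2) (box_K2_class P Q) (box_K2_class Q P)"
    using bip by (rule bipartition_box_K2)
  have fin_PQ: "finite P" "finite Q"
    using fin bip unfolding bipartition_def by (auto intro: finite_subset)
  have fin_box: "finite (fst (box_product H K2))" using fin by (simp add: fst_box_K2)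
  have "S \<subseteq> M" using forcing unfolding forcing_set_def by blast
  moreover have "M \<subseteq> snd (box_product H K2)" using pm unfolding perfect_matching_def by blast
  ultimately have S_edges: "S \<subseteq> snd (box_product H K2)" by blast
  then have "finite S" using bipartition_finite_edges[OF bip_box fin_box] by (rule finite_subset)
  define J where "J = box_K2_class Q P \<inter> \<Union>S"
  define a where "a q x = (if snd q then of_bool (x = fst q) else - C x (fst q))" for q x
  have "card J < card P"
    using bipartition_card_covered_le[OF bip_box S_edges \<open>finite S\<close>] \<open>\<not> card P \<le> card S\<close>
    unfolding J_def by simp
  moreover have "finite J" using fin_PQ unfolding J_def box_K2_class_def by blast
  ultimately obtain w where w: "\<exists>x\<in>P. w x \<noteq> 0" "\<forall>q\<in>J. (\<Sum>x\<in>P. a q x * w x) = 0"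
    using homogeneous_system_nontrivial_solution[of J P a] fin_PQ by blast
  define v where "v = (\<lambda>q. if snd q then w (fst q) else - (\<Sum>x\<in>P. C x (fst q) * w x))"
  have v_linear: "v q = (\<Sum>x\<in>P. a q x * w x)" if "q \<in> box_K2_class Q P" for q
    using that fin_PQ by (cases q; cases "snd q") (auto simp: v_def a_def box_K2_class_def sum_negf)
  have "\<not> forcing_set (box_product H K2) M S"
  proof (rule kernel_vector_not_forcing[OF fin_box bip_box weighted_biadj_box_K2[OF bip B C] pm])
    show "S \<subseteq> M" by fact
    show "\<forall>p\<in>box_K2_class P Q. (\<Sum>q\<in>box_K2_class Q P. box_K2_biadj P Q B C p q * v q) = 0"
      using box_K2_biadj_kernel[OF fin_PQ inverse] unfolding v_def by blast
    show "\<forall>q\<in>box_K2_class Q P \<inter> \<Union>S. v q = 0"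
      using w(2) v_linear unfolding J_def by auto
    obtain x where "x \<in> P" "w x \<noteq> 0" using w(1) by blast
    then show "\<exists>q\<in>box_K2_class Q P. v q \<noteq> 0"
      by (intro bexI[of _ "(x, True)"]) (simp_all add: v_def box_K2_class_def)
  qed
  with forcing show False by contradiction
qed

theorem forcing_number_box_K2:
  fixes H :: "'v graph"
  assumes fin: "finite (fst H)" and bip: "bipartition H P Q"
    and "(R_F H P Q :: ('v \<Rightarrow> 'v \<Rightarrow> 'f::field) set) \<noteq> {}"
  shows "forcing_number (box_product H K2) = card P"
proof -
  obtain B C :: "'v \<Rightarrow> 'v \<Rightarrow> 'f" where B: "weighted_biadj H P Q B" and C: "weighted_biadj H P Q C"
    and inverse: "\<forall>x\<in>P. \<forall>x'\<in>P. (\<Sum>y\<in>Q. B x y * C x' y) = (if x = x' then 1 else 0)"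
    using assms(3) unfolding R_F_def by blast
  have lower: "card P \<le> forcing_number_pm (box_product H K2) M"
    if "perfect_matching (box_product H K2) M" for M
    using le_forcing_number_pm[OF forcing_set_self[OF bipartition_box_K2[OF bip] that]]
      card_le_forcing_set_box_K2[OF fin bip B C inverse that] by blast
  have "forcing_number_pm (box_product H K2) (rung ` fst H) \<le> card (rung ` P)"
    by (rule forcing_number_pm_le[OF forcing_set_rungs[OF bip]])
  also have "card (rung ` P) = card P"
    by (rule card_image) (auto intro: inj_onI simp: rung_def doubleton_eq_iff)
  finally have upper: "forcing_number_pm (box_product H K2) (rung ` fst H) \<le> card P" .
  show ?thesis unfolding forcing_number_def
  proof (rule Least_equality)
    show "\<exists>M. perfect_matching (box_product H K2) M \<and>
        forcing_number_pm (box_product H K2) M = card P"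
      using perfect_matching_rungs lower[OF perfect_matching_rungs] upper by (blast intro: antisym)
  qed (use lower in blast)
qed

section \<open>Deleting vertices of one colour class\<close>

lemma bipartition_delete_vertices:
  assumes "bipartition G X Y" "D \<subseteq> X"
  shows "bipartition (delete_vertices G D) (X - D) Y"
proof -
  have XY: "X \<inter> Y = {}" "X \<union> Y = fst G" and edges: "\<forall>e\<in>snd G. \<exists>x\<in>X. \<exists>y\<in>Y. e = {x, y}"
    using assms(1) unfolding bipartition_def by auto
  have "\<exists>x\<in>X - D. \<exists>y\<in>Y. e = {x, y}" if e: "e \<in> snd G" "e \<inter> D = {}" for e
  proof -
    obtain x y where xy: "x \<in> X" "y \<in> Y" "e = {x, y}" using edges e(1) by metis
    with e(2) have "x \<notin> D" by blast
    with xy show ?thesis by blast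
  qed
  with XY assms(2) show ?thesis unfolding bipartition_def delete_vertices_def by auto
qed

lemma weighted_biadj_delete_vertices:
  assumes bip: "bipartition G X Y" and "D \<subseteq> X" and B: "weighted_biadj G X Y B"
  shows "weighted_biadj (delete_vertices G D) (X - D) Y (\<lambda>x y. if x \<in> D then 0 else B x y)"
proof -
  have "{x, y} \<inter> D = {}" if "x \<in> X - D" "y \<in> Y" for x y
    using that bip \<open>D \<subseteq> X\<close> unfolding bipartition_def by auto
  then show ?thesis
    using B unfolding weighted_biadj_def delete_vertices_def by auto
qed

lemma R_F_delete_vertices:
  assumes "bipartition G X Y" "D \<subseteq> X" "B \<in> R_F G X Y"
  shows "(\<lambda>x y. if x \<in> D then 0 else B x y) \<in> R_F (delete_vertices G D) (X - D) Y"
proof -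
  obtain C where "weighted_biadj G X Y B" "weighted_biadj G X Y C"
    and inverse: "\<forall>x\<in>X. \<forall>x'\<in>X. (\<Sum>y\<in>Y. B x y * C x' y) = (if x = x' then 1 else 0)"
    using assms(3) unfolding R_F_def by blast
  then have "weighted_biadj (delete_vertices G D) (X - D) Y (\<lambda>x y. if x \<in> D then 0 else B x y)"
    "weighted_biadj (delete_vertices G D) (X - D) Y (\<lambda>x y. if x \<in> D then 0 else C x y)"
    using weighted_biadj_delete_vertices assms(1,2) by blast+
  with inverse show ?thesis unfolding R_F_def by auto
qed

theorem corollary3p3:
  fixes G :: "'v graph" and X Y D :: "'v set" and m n k :: nat
  assumes "simple_graph G"
    and "bipartition G X Y"
    and "card X = m" and "card Y = n" and "m \<le> n"
    and "(R_F G X Y :: ('v \<Rightarrow> 'v \<Rightarrow> 'f::field) set) \<noteq> {}"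
    and "D \<subseteq> X" and "card D = k"
  shows "forcing_number (box_product (delete_vertices G D) K2) = m - k"
proof -
  have "finite (fst G)" using assms(1) unfolding simple_graph_def by blast
  moreover have "X \<subseteq> fst G" using assms(2) unfolding bipartition_def by blast
  ultimately have fin: "finite (fst (delete_vertices G D))" "finite X"
    unfolding delete_vertices_def by (auto intro: finite_subset)
  obtain B :: "'v \<Rightarrow> 'v \<Rightarrow> 'f" where "B \<in> R_F G X Y" using assms(6) by blast
  then have "(R_F (delete_vertices G D) (X - D) Y :: ('v \<Rightarrow> 'v \<Rightarrow> 'f) set) \<noteq> {}"
    using R_F_delete_vertices[OF assms(2,7)] by blast
  with fin(1) bipartition_delete_vertices[OF assms(2,7)]
  have "forcing_number (box_product (delete_vertices G D) K2) = card (X - D)"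
    by (rule forcing_number_box_K2)
  also have "card (X - D) = m - k"
    using fin(2) assms(3,7,8) by (simp add: card_Diff_subset finite_subset)
  finally show ?thesis .
qed

end
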